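(* For every edge-set $F\subseteq E(H)$ with $|F|=\ell$, a tree embedding $(\mathcal T,\mathcal M,y)$ sampled from $\mathcal D$ is good for $F$ with probability at least $1/2$.
   Context: Standing setup. $G=(V,E)$ is an undirected graph with $n=|V|$, demand-pairs $(S_i,T_i)$, $i\in[q]$, of subsets of $V$. $\ell\ge1$ is an integer and $E_\ell\subseteq E$ an edge set such that in $(V,E_\ell)$ every $(S_i,T_i)$ is $\ell$-edge-connected. $x:E\to[0,1]$ satisfies $x_e=1$ for $e\in E_\ell$ and $\sum_{e\in\delta_G(X)}x_e\ge \ell+1$ for every $i\in[q]$ and every $X$ with $T_i\subseteq X\subseteq V\setminus S_i$ (here $\delta_G(X)$ is the set of edges of $G$ with exactly one endpoint in $X$; $x(F)=\sum_{e\in F}x_e$). $\beta\ge1$ is a real. $\mathsf{LARGE}=\{e: x_e\ge 1/(4\ell\beta)\}$, $\mathsf{SMALL}=E\setminus\mathsf{LARGE}$, and $H=(V,\mathsf{LARGE})$. Capacities: $\tilde x_e=1/(4\ell\beta)$ if $e\in\mathsf{LARGE}$; $\tilde x_e=0$ if $x_e<\frac{1}{2n^2}\cdot\frac1{4\ell\beta}$; $\tilde x_e=x_e$ otherwise. A tree embedding $(\mathcal T,\mathcal M,y)$ of $(G,\tilde x)$: $\mathcal T$ is a tree; $\mathcal M$ maps nodes of $\mathcal T$ to vertices of $G$ and is a bijection between leaves of $\mathcal T$ and $V$ (a vertex set of $G$ is identified with the corresponding leaf set); each tree edge $f=(u,v)$ is mapped to a path $\mathcal M(f)$ in $G$ between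 $\mathcal M(u)$ and $\mathcal M(v)$; $y(f)=\tilde x(\delta_G(X))$ where $(X,V\setminus X)$ is the leaf partition induced by $\mathcal T-f$. $\mathcal M^{-1}(e)=\{f: e\in\mathcal M(f)\}$, $\mathcal M^{-1}(F)=\bigcup_{e\in F}\mathcal M^{-1}(e)$, $\mathcal M(E')=\bigcup_{f\in E'}\mathcal M(f)$, $\mathsf{load}(e)=\sum_{f\in\mathcal M^{-1}(e)}y(f)$. $\mathcal D$ is a probability distribution over tree embeddings of $(G,\tilde x)$ with $\mathbb{E}_{\mathcal T\sim\mathcal D}[\mathsf{load}(e)]\le\beta\,\tilde x_e$ for every $e\in E$, and for every tree in its support and all disjoint $A,B\subseteq V$, the maximum $A$–$B$ flow in $\mathcal T$ under capacities $y$ is at least the maximum $A$–$B$ flow in $G$ under capacities $\tilde x$. A tree embedding $(\mathcal T,\mathcal M,y)$ is good for $F\subseteq E(H)$ if $y(\mathcal M^{-1}(F))=\sum_{f\in\mathcal M^{-1}(F)}y(f)\le1/2$. *)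

theory Defs
  imports "HOL-Probability.Probability"
begin

definition is_graph :: "'v set \<Rightarrow> 'v set set \<Rightarrow> bool" where
  "is_graph V E \<longleftrightarrow> finite V \<and> (\<forall>e\<in>E. \<exists>u v. e = {u, v} \<and> u \<noteq> v \<and> u \<in> V \<and> v \<in> V)"

definition dcut :: "'v set set \<Rightarrow> 'v set \<Rightarrow> 'v set set" where
  "dcut E X = {e \<in> E. card (e \<inter> X) = 1}"

definition adjrel :: "'a set set \<Rightarrow> ('a \<times> 'a) set" where
  "adjrel Es = {(u, v). {u, v} \<in> Es}"

definition edge_connected_pair :: "nat \<Rightarrow> 'v set \<Rightarrow> 'v set set \<Rightarrow> 'v set \<Rightarrow> 'v set \<Rightarrow> bool" where
  "edge_connected_pair k V Es S T \<longleftrightarrow>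
     (\<forall>X. T \<subseteq> X \<and> X \<subseteq> V - S \<longrightarrow> card (dcut Es X) \<ge> k)"

definition path_edges :: "'v list \<Rightarrow> 'v set set" where
  "path_edges p = set (map (\<lambda>(a, b). {a, b}) (zip p (tl p)))"

definition is_path :: "'v set set \<Rightarrow> 'v list \<Rightarrow> 'v \<Rightarrow> 'v \<Rightarrow> bool" where
  "is_path E p a b \<longleftrightarrow> p \<noteq> [] \<and> hd p = a \<and> last p = b \<and> distinct p \<and> path_edges p \<subseteq> E"

definition is_tree :: "'n set \<Rightarrow> 'n set set \<Rightarrow> bool" where
  "is_tree N TE \<longleftrightarrow> finite N \<and> N \<noteq> {}
     \<and> (\<forall>f\<in>TE. \<exists>u v. f = {u, v} \<and> u \<noteq> v \<and> u \<in> N \<and> v \<in> N)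
     \<and> (\<forall>u\<in>N. \<forall>v\<in>N. (u, v) \<in> (adjrel TE)\<^sup>*)
     \<and> \<not> (\<exists>cs. length cs \<ge> 3 \<and> distinct cs \<and> set cs \<subseteq> N \<and>
             (\<forall>i<length cs. {cs ! i, cs ! ((i + 1) mod length cs)} \<in> TE))"

definition leaves :: "'n set \<Rightarrow> 'n set set \<Rightarrow> 'n set" where
  "leaves N TE = {u \<in> N. card {f \<in> TE. u \<in> f} \<le> 1}"

definition side :: "'n set set \<Rightarrow> 'n set \<Rightarrow> 'n \<Rightarrow> 'n set" where
  "side TE f a = {w. (a, w) \<in> (adjrel (TE - {f}))\<^sup>*}"

record ('n, 'v) temb =
  tnodes :: "'n set"
  tedges :: "'n set set"
  tmap :: "'n \<Rightarrow> 'v"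
  tpath :: "'n set \<Rightarrow> 'v list"
  ty :: "'n set \<Rightarrow> real"

definition tree_embedding :: "'v set \<Rightarrow> 'v set set \<Rightarrow> ('v set \<Rightarrow> real) \<Rightarrow> ('n, 'v) temb \<Rightarrow> bool" where
  "tree_embedding V E c T \<longleftrightarrow>
     is_tree (tnodes T) (tedges T)
     \<and> tmap T ` tnodes T \<subseteq> V
     \<and> bij_betw (tmap T) (leaves (tnodes T) (tedges T)) V
     \<and> (\<forall>f\<in>tedges T. \<exists>u v. f = {u, v} \<and> is_path E (tpath T f) (tmap T u) (tmap T v))
     \<and> (\<forall>f\<in>tedges T. \<forall>a\<in>f.
          ty T f = sum c (dcut E (tmap T ` (leaves (tnodes T) (tedges T) \<inter> side (tedges T) f a))))"

definition Minv :: "('n, 'v) temb \<Rightarrow> 'v set set \<Rightarrow> 'n set set" where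
  "Minv T F = {f \<in> tedges T. \<exists>e\<in>F. e \<in> path_edges (tpath T f)}"

definition load :: "('n, 'v) temb \<Rightarrow> 'v set \<Rightarrow> real" where
  "load T e = (\<Sum>f\<in>Minv T {e}. ty T f)"

definition good :: "('n, 'v) temb \<Rightarrow> 'v set set \<Rightarrow> bool" where
  "good T F \<longleftrightarrow> (\<Sum>f\<in>Minv T F. ty T f) \<le> 1/2"

definition flow_feasible :: "'a set \<Rightarrow> 'a set set \<Rightarrow> ('a set \<Rightarrow> real) \<Rightarrow> 'a set \<Rightarrow> 'a set \<Rightarrow> ('a \<Rightarrow> 'a \<Rightarrow> real) \<Rightarrow> bool" where
  "flow_feasible Vs Es c A B g \<longleftrightarrow>
     (\<forall>u v. g u v = - g v u)
     \<and> (\<forall>u v. {u, v} \<notin> Es \<longrightarrow> g u v = 0)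
     \<and> (\<forall>u v. {u, v} \<in> Es \<longrightarrow> \<bar>g u v\<bar> \<le> c {u, v})
     \<and> (\<forall>w\<in>Vs - (A \<union> B). (\<Sum>u\<in>Vs. g w u) = 0)"

definition flow_value :: "'a set \<Rightarrow> 'a set \<Rightarrow> ('a \<Rightarrow> 'a \<Rightarrow> real) \<Rightarrow> real" where
  "flow_value Vs A g = (\<Sum>a\<in>A. \<Sum>u\<in>Vs. g a u)"

definition maxflow :: "'a set \<Rightarrow> 'a set set \<Rightarrow> ('a set \<Rightarrow> real) \<Rightarrow> 'a set \<Rightarrow> 'a set \<Rightarrow> real" where
  "maxflow Vs Es c A B = Sup {flow_value Vs A g | g. flow_feasible Vs Es c A B g}"

definition xtilde :: "'v set set \<Rightarrow> nat \<Rightarrow> nat \<Rightarrow> real \<Rightarrow> ('v set \<Rightarrow> real) \<Rightarrow> 'v set \<Rightarrow> real" where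
  "xtilde E n l \<beta> x e =
     (if e \<notin> E then 0
      else if x e \<ge> 1 / (4 * real l * \<beta>) then 1 / (4 * real l * \<beta>)
      else if x e < 1 / (2 * real n ^ 2) * (1 / (4 * real l * \<beta>)) then 0
      else x e)"

definition LARGE :: "'v set set \<Rightarrow> nat \<Rightarrow> real \<Rightarrow> ('v set \<Rightarrow> real) \<Rightarrow> 'v set set" where
  "LARGE E l \<beta> x = {e \<in> E. x e \<ge> 1 / (4 * real l * \<beta>)}"

end

theory Submission imports Defs begin

text \<open>Markov's inequality: every edge of \<open>F\<close> is in \<open>LARGE\<close>, so its capacity is capped at
  \<open>1/(4\<ell>\<beta>)\<close> and its expected load is at most \<open>1/(4\<ell>)\<close>. The weight \<open>y(\<M>\<inverse>(F))\<close> is bounded by the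
  total load of the \<open>\<ell>\<close> edges of \<open>F\<close>, so its expectation is at most \<open>1/4\<close>, and it exceeds \<open>1/2\<close>
  with probability at most \<open>1/2\<close>.\<close>

lemma sum_UN_le:
  fixes g :: "'a \<Rightarrow> 'b::ordered_ab_group_add"
  assumes "finite I" "\<forall>i\<in>I. finite (A i)" "\<forall>a\<in>(\<Union>i\<in>I. A i). 0 \<le> g a"
  shows "sum g (\<Union>i\<in>I. A i) \<le> (\<Sum>i\<in>I. sum g (A i))"
  using assms
proof (induction I rule: finite_induct)
  case empty
  then show ?case by simp
next
  case (insert i I)
  have "sum g (\<Union>j\<in>insert i I. A j)
      = sum g (A i) + sum g (\<Union>j\<in>I. A j) - sum g (A i \<inter> (\<Union>j\<in>I. A j))"
    using insert.prems insert.hyps(1) by (simp add: sum_Un)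
  also have "\<dots> \<le> sum g (A i) + sum g (\<Union>j\<in>I. A j)"
    using insert.prems by (intro diff_le_eq[THEN iffD2] le_add_same_cancel1[THEN iffD2]
        sum_nonneg) auto
  also have "\<dots> \<le> sum g (A i) + (\<Sum>j\<in>I. sum g (A j))"
    using insert by (simp add: add_left_mono)
  finally show ?case
    using insert.hyps by simp
qed

lemma measure_pmf_gt_le_nn_integral:
  fixes p :: "'a pmf" and X :: "'a \<Rightarrow> real"
  assumes integral: "(\<integral>\<^sup>+ a. ennreal (X a) \<partial>measure_pmf p) \<le> ennreal b"
    and t: "0 < t" and b: "0 \<le> b"
  shows "measure_pmf.prob p {a. t < X a} \<le> b / t"
proof -
  let ?A = "{a. t < X a}"
  have "ennreal (t * measure_pmf.prob p ?A) = ennreal t * emeasure (measure_pmf p) ?A"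
    using t by (simp add: ennreal_mult measure_pmf.emeasure_eq_measure)
  also have "\<dots> = (\<integral>\<^sup>+ a. ennreal t * indicator ?A a \<partial>measure_pmf p)"
    by (simp add: nn_integral_cmult_indicator)
  also have "\<dots> \<le> (\<integral>\<^sup>+ a. ennreal (X a) \<partial>measure_pmf p)"
    by (intro nn_integral_mono) (auto simp: indicator_def intro: ennreal_leI)
  also note integral
  finally have "t * measure_pmf.prob p ?A \<le> b"
    using b by (simp add: ennreal_le_iff)
  then show ?thesis
    using t by (simp add: pos_le_divide_eq mult.commute)
qed

lemma is_tree_finite_edges:
  assumes "is_tree N TE"
  shows "finite TE"
proof -
  have "finite N"
    using assms unfolding is_tree_def by (elim conjE) assumption
  have edges: "\<forall>f\<in>TE. \<exists>u v. f = {u, v} \<and> u \<noteq> v \<and> u \<in> N \<and> v \<in> N"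
    using assms unfolding is_tree_def by (elim conjE) assumption
  from edges have "TE \<subseteq> Pow N"
    by fastforce
  with \<open>finite N\<close> show ?thesis
    by (meson finite_Pow_iff finite_subset)
qed

lemma tree_embedding_ty_nonneg:
  assumes emb: "tree_embedding V E c Tm" and c: "\<forall>e. 0 \<le> c e" and f: "f \<in> tedges Tm"
  shows "0 \<le> ty Tm f"
proof -
  have ends: "\<forall>f\<in>tedges Tm. \<exists>u v. f = {u, v} \<and> is_path E (tpath Tm f) (tmap Tm u) (tmap Tm v)"
    using emb unfolding tree_embedding_def by (elim conjE) assumption
  have cut: "\<forall>f\<in>tedges Tm. \<forall>a\<in>f.
      ty Tm f = sum c (dcut E (tmap Tm ` (leaves (tnodes Tm) (tedges Tm) \<inter> side (tedges Tm) f a)))"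
    using emb unfolding tree_embedding_def by (elim conjE) assumption
  obtain u v where "f = {u, v}"
    using ends f by blast
  then have "ty Tm f = sum c (dcut E (tmap Tm ` (leaves (tnodes Tm) (tedges Tm) \<inter> side (tedges Tm) f u)))"
    using cut f by blast
  then show ?thesis
    using c by (simp add: sum_nonneg)
qed

lemma Minv_eq_UN: "Minv Tm F = (\<Union>e\<in>F. Minv Tm {e})"
  unfolding Minv_def by auto

lemma load_nonneg:
  assumes "tree_embedding V E c Tm" "\<forall>e. 0 \<le> c e"
  shows "0 \<le> load Tm e"
  using assms tree_embedding_ty_nonneg unfolding load_def Minv_def
  by (intro sum_nonneg) blast

lemma sum_ty_Minv_le_sum_load:
  assumes emb: "tree_embedding V E c Tm" and c: "\<forall>e. 0 \<le> c e" and F: "finite F"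
  shows "(\<Sum>f\<in>Minv Tm F. ty Tm f) \<le> (\<Sum>e\<in>F. load Tm e)"
proof -
  have "finite (tedges Tm)"
    using emb unfolding tree_embedding_def by (elim conjE) (erule is_tree_finite_edges)
  then have "\<forall>e\<in>F. finite (Minv Tm {e})"
    unfolding Minv_def by simp
  moreover have "\<forall>f\<in>(\<Union>e\<in>F. Minv Tm {e}). 0 \<le> ty Tm f"
    using tree_embedding_ty_nonneg[OF emb c] unfolding Minv_def by blast
  ultimately show ?thesis
    unfolding Minv_eq_UN[of Tm F] load_def by (rule sum_UN_le[OF F])
qed

lemma expected_Minv_weight_le_sum_expected_load:
  assumes emb: "\<forall>Tm\<in>set_pmf D. tree_embedding V E c Tm" and c: "\<forall>e. 0 \<le> c e"
    and F: "finite F"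
  shows "(\<integral>\<^sup>+ Tm. ennreal (\<Sum>f\<in>Minv Tm F. ty Tm f) \<partial>measure_pmf D)
           \<le> (\<Sum>e\<in>F. \<integral>\<^sup>+ Tm. ennreal (load Tm e) \<partial>measure_pmf D)"
proof -
  have "(\<integral>\<^sup>+ Tm. ennreal (\<Sum>f\<in>Minv Tm F. ty Tm f) \<partial>measure_pmf D)
         \<le> (\<integral>\<^sup>+ Tm. (\<Sum>e\<in>F. ennreal (load Tm e)) \<partial>measure_pmf D)"
  proof (intro nn_integral_mono_AE AE_pmfI)
    fix Tm assume "Tm \<in> set_pmf D"
    then have emb_Tm: "tree_embedding V E c Tm"
      using emb by blast
    have "ennreal (\<Sum>f\<in>Minv Tm F. ty Tm f) \<le> ennreal (\<Sum>e\<in>F. load Tm e)"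
      by (rule ennreal_leI[OF sum_ty_Minv_le_sum_load[OF emb_Tm c F]])
    also have "\<dots> = (\<Sum>e\<in>F. ennreal (load Tm e))"
      by (rule sum_ennreal[symmetric]) (rule load_nonneg[OF emb_Tm c])
    finally show "ennreal (\<Sum>f\<in>Minv Tm F. ty Tm f) \<le> (\<Sum>e\<in>F. ennreal (load Tm e))" .
  qed
  also have "\<dots> = (\<Sum>e\<in>F. \<integral>\<^sup>+ Tm. ennreal (load Tm e) \<partial>measure_pmf D)"
    by (rule nn_integral_sum) simp
  finally show ?thesis .
qed

lemma xtilde_nonneg:
  assumes "\<forall>e\<in>E. 0 \<le> x e" "l \<ge> 1" "\<beta> \<ge> 1"
  shows "0 \<le> xtilde E n l \<beta> x e"
  using assms unfolding xtilde_def by (auto simp: zero_le_mult_iff)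

lemma xtilde_LARGE:
  "e \<in> LARGE E l \<beta> x \<Longrightarrow> xtilde E n l \<beta> x e = 1 / (4 * real l * \<beta>)"
  unfolding xtilde_def LARGE_def by simp

theorem lemma5p2:
  fixes V :: "'v set" and E El :: "'v set set"
    and q l :: nat and S T :: "nat \<Rightarrow> 'v set"
    and x :: "'v set \<Rightarrow> real" and \<beta> :: real
    and D :: "('n, 'v) temb pmf" and F :: "'v set set"
  assumes graph: "is_graph V E"
    and demands: "\<forall>i<q. S i \<subseteq> V \<and> T i \<subseteq> V"
    and l_pos: "l \<ge> 1"
    and El_sub: "El \<subseteq> E"
    and El_conn: "\<forall>i<q. edge_connected_pair l V El (S i) (T i)"
    and x_range: "\<forall>e\<in>E. 0 \<le> x e \<and> x e \<le> 1"
    and x_El: "\<forall>e\<in>El. x e = 1"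
    and x_cut: "\<forall>i<q. \<forall>X. T i \<subseteq> X \<and> X \<subseteq> V - S i \<longrightarrow> sum x (dcut E X) \<ge> real l + 1"
    and beta: "\<beta> \<ge> 1"
    and D_emb: "\<forall>Tm\<in>set_pmf D. tree_embedding V E (xtilde E (card V) l \<beta> x) Tm"
    and D_load: "\<forall>e\<in>E. (\<integral>\<^sup>+ Tm. ennreal (load Tm e) \<partial>measure_pmf D)
                          \<le> ennreal (\<beta> * xtilde E (card V) l \<beta> x e)"
    and D_flow: "\<forall>Tm\<in>set_pmf D. \<forall>A B. A \<subseteq> V \<and> B \<subseteq> V \<and> A \<inter> B = {} \<longrightarrow>
                   maxflow (tnodes Tm) (tedges Tm) (ty Tm)
                     {u \<in> leaves (tnodes Tm) (tedges Tm). tmap Tm u \<in> A}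
                     {u \<in> leaves (tnodes Tm) (tedges Tm). tmap Tm u \<in> B}
                   \<ge> maxflow V E (xtilde E (card V) l \<beta> x) A B"
    and F_sub: "F \<subseteq> LARGE E l \<beta> x"
    and F_card: "card F = l"
  shows "measure_pmf.prob D {Tm. good Tm F} \<ge> 1/2"
proof -
  have F_fin: "finite F"
    using F_card l_pos card_ge_0_finite[of F] by simp
  have c_nonneg: "\<forall>e. 0 \<le> xtilde E (card V) l \<beta> x e"
    using xtilde_nonneg x_range l_pos beta by blast
  have load_F: "(\<integral>\<^sup>+ Tm. ennreal (load Tm e) \<partial>measure_pmf D) \<le> ennreal (1 / (4 * real l))"
    if "e \<in> F" for e
  proof -
    have "e \<in> E" "\<beta> * xtilde E (card V) l \<beta> x e = 1 / (4 * real l)"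
      using that F_sub beta xtilde_LARGE[of e E l \<beta> x "card V"] unfolding LARGE_def by auto
    then show ?thesis
      using D_load by metis
  qed
  have "(\<integral>\<^sup>+ Tm. ennreal (\<Sum>f\<in>Minv Tm F. ty Tm f) \<partial>measure_pmf D)
          \<le> (\<Sum>e\<in>F. ennreal (1 / (4 * real l)))"
    using expected_Minv_weight_le_sum_expected_load[OF D_emb c_nonneg F_fin] load_F
    by (meson order.trans sum_mono)
  also have "\<dots> = of_nat l * ennreal (1 / (4 * real l))"
    using F_card by simp
  also have "\<dots> = ennreal (real l * (1 / (4 * real l)))"
    by (subst ennreal_mult) (auto simp: ennreal_of_nat_eq_real_of_nat)
  also have "\<dots> = ennreal (1/4)"
    using l_pos by simp
  finally have "measure_pmf.prob D {Tm. 1/2 < (\<Sum>f\<in>Minv Tm F. ty Tm f)} \<le> (1/4) / (1/2)"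
    by (rule measure_pmf_gt_le_nn_integral) simp_all
  moreover have "{Tm. good Tm F} = space (measure_pmf D) - {Tm. 1/2 < (\<Sum>f\<in>Minv Tm F. ty Tm f)}"
    unfolding good_def by auto
  ultimately show ?thesis
    using measure_pmf.prob_compl[of "{Tm. 1/2 < (\<Sum>f\<in>Minv Tm F. ty Tm f)}" D] by simp
qed

end
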